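(* Let $k$ be an ordered blueprint and $B$ an ordered blue $k$-algebra, and let $v_0:\mathbb F_1\to\mathbb B$ be the trivial valuation. Then there is a canonical isomorphism of semirings $\mathrm{An}(B,k)\simeq\mathrm{Bend}_{v_0}(B^{\mathrm{mon}}_{k\le1})^+$, and $\mathrm{An}(B,k)$ represents $\mathrm{Val}(B,k;-)$: for every idempotent semiring $S$ the map $\mathrm{Hom}(\mathrm{An}(B,k),S)\to\mathrm{Val}(B,k;S)$, $f\mapsto (a\mapsto f(\langle a\rangle))$, is a bijection natural in $S$.
   Context: Ordered blueprints: a pair of an ordered semiring $B^+$ (commutative with $0,1$, partial order compatible with $+$ and $\cdot$) and a multiplicatively closed subset $B^\bullet\ni0,1$ generating $B^+$; morphisms are order-preserving semiring homomorphisms preserving $\bullet$. Semirings are viewed as trivially ordered blueprints with $S^\bullet=S$. An ordered blue $k$-algebra is a morphism $k\to B$; write $\bar a$ for the image of $a\in k^\bullet$. $\mathbb F_1$ is the ordered blueprint with $\mathbb F_1^\bullet=\{0,1\}$, $\mathbb F_1^+=\mathbb N$, trivially ordered (initial ordered blueprint); $\mathbb B$ is the Boolean semifield $\{0,1\}$ with $1+1=1$, trivially ordered; $v_0(0)=0$, $v_0(1)=1$. $k$-spans: a $k$-span in $B$ is a subset $M\subset B^\bullet$ closed under multiplication by (images of) elements of $k^\bullet$ and containing every $b\in B^\bullet$ for which there are $a_i\in M$ with $b\le\sum a_i$ in $B^+$. $\langle a_1,\dots\rangle$ is the smallest $k$-span containing the $a_i$; a $k$-span is finitely generated if it equals $\langle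 a_1,\dots,a_n\rangle$ for finitely many $a_i$. $\mathrm{An}(B,k)$ is the set of finitely generated $k$-spans with $M_1+M_2=\{m: m\le m_1+m_2$ in $B^+$ for some $m_i\in M_i\}$ and $M_1\cdot M_2=\{m_1m_2: m_i\in M_i\}$; it is an idempotent semiring. A valuation $w:B\to S$ into an idempotent semiring $S$ is a multiplicative map $B^\bullet\to S$ with $w(0)=0$, $w(1)=1$ such that $a\le\sum b_j$ in $B^+$ ($a,b_j\in B^\bullet$) implies $w(a)+\sum w(b_j)=\sum w(b_j)$; it is integral on $k$ if $w(\bar a)+1=1$ for all $a\in k^\bullet$. $\mathrm{Val}(B,k;S)$ is the set of such valuations. $B^{\mathrm{mon}}$ has underlying monoid $B^\bullet$ and semiring $\mathbb N[B^\bullet]$ (zero of $B^\bullet$ identified with $0$), ordered by the order generated by the relations $a\le\sum b_j$ ($a,b_j\in B^\bullet$) holding in $B^+$. $B^{\mathrm{mon}}_{k\le1}$ is $B^{\mathrm{mon}}$ with the additional relations $\bar a\le 1$ for all $a\in k^\bullet$ imposed. For an ordered blueprint $C$, $\mathrm{Bend}_{v_0}(C)$ is the ordered blue $\mathbb B$-algebra with underlying monoid $C^\bullet$ whose semiring $\mathrm{Bend}_{v_0}(C)^+$ is the quotient of $\mathbb B[C^\bullet]^+$ (zero identified) by the congruence generated by $a+\sum b_j=\sum b_j$ for all relations $a\le\sum b_j$ in $C^+$ with $a,b_j\in C^\bullet$. *)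

theory Defs
  imports "HOL-Library.Multiset" "HOL-Library.FuncSet"
begin

record 'a srng =
  car :: "'a set"
  add :: "'a \<Rightarrow> 'a \<Rightarrow> 'a"
  mul :: "'a \<Rightarrow> 'a \<Rightarrow> 'a"
  zer :: 'a
  one :: 'a

definition comm_srng :: "('a, 'm) srng_scheme \<Rightarrow> bool" where
  "comm_srng R \<longleftrightarrow>
     zer R \<in> car R \<and> one R \<in> car R \<and>
     (\<forall>x\<in>car R. \<forall>y\<in>car R. add R x y \<in> car R \<and> mul R x y \<in> car R) \<and>
     (\<forall>x\<in>car R. \<forall>y\<in>car R. \<forall>z\<in>car R.
        add R (add R x y) z = add R x (add R y z) \<and>
        mul R (mul R x y) z = mul R x (mul R y z) \<and>
        mul R x (add R y z) = add R (mul R x y) (mul R x z)) \<and>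
     (\<forall>x\<in>car R. \<forall>y\<in>car R. add R x y = add R y x \<and> mul R x y = mul R y x) \<and>
     (\<forall>x\<in>car R. add R (zer R) x = x \<and> mul R (one R) x = x \<and> mul R (zer R) x = zer R)"

definition sumlist :: "('a, 'm) srng_scheme \<Rightarrow> 'a list \<Rightarrow> 'a" where
  "sumlist R xs = foldr (add R) xs (zer R)"

definition idem_srng :: "('a, 'm) srng_scheme \<Rightarrow> bool" where
  "idem_srng S \<longleftrightarrow> comm_srng S \<and> add S (one S) (one S) = one S"

definition srng_hom :: "('a, 'm) srng_scheme \<Rightarrow> ('b, 'n) srng_scheme \<Rightarrow> ('a \<Rightarrow> 'b) \<Rightarrow> bool" where
  "srng_hom R S f \<longleftrightarrow>
     (\<forall>x\<in>car R. f x \<in> car S) \<and> f (zer R) = zer S \<and> f (one R) = one S \<and>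
     (\<forall>x\<in>car R. \<forall>y\<in>car R. f (add R x y) = add S (f x) (f y) \<and> f (mul R x y) = mul S (f x) (f y))"

text \<open>An ordered blueprint: ordered semiring \<open>B\<^sup>+\<close> (field \<open>le\<close> is the partial order)
  together with the multiplicative subset \<open>B\<^sup>\<bullet>\<close> (field \<open>bul\<close>).\<close>
record 'a obp = "'a srng" +
  le  :: "'a \<Rightarrow> 'a \<Rightarrow> bool"
  bul :: "'a set"

definition ordered_blueprint :: "('a, 'm) obp_scheme \<Rightarrow> bool" where
  "ordered_blueprint B \<longleftrightarrow>
     comm_srng B \<and>
     (\<forall>x\<in>car B. le B x x) \<and>
     (\<forall>x\<in>car B. \<forall>y\<in>car B. le B x y \<and> le B y x \<longrightarrow> x = y) \<and>
     (\<forall>x\<in>car B. \<forall>y\<in>car B. \<forall>z\<in>car B. le B x y \<and> le B y z \<longrightarrow> le B x z) \<and>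
     (\<forall>x y. le B x y \<longrightarrow> x \<in> car B \<and> y \<in> car B) \<and>
     (\<forall>x\<in>car B. \<forall>y\<in>car B. \<forall>z\<in>car B. le B x y \<longrightarrow>
        le B (add B x z) (add B y z) \<and> le B (mul B x z) (mul B y z)) \<and>
     bul B \<subseteq> car B \<and> zer B \<in> bul B \<and> one B \<in> bul B \<and>
     (\<forall>x\<in>bul B. \<forall>y\<in>bul B. mul B x y \<in> bul B) \<and>
     (\<forall>x\<in>car B. \<exists>xs. set xs \<subseteq> bul B \<and> x = sumlist B xs)"

definition obp_hom :: "('a, 'm) obp_scheme \<Rightarrow> ('b, 'n) obp_scheme \<Rightarrow> ('a \<Rightarrow> 'b) \<Rightarrow> bool" where
  "obp_hom k B f \<longleftrightarrow> srng_hom k B f \<and>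
     (\<forall>x y. le k x y \<longrightarrow> le B (f x) (f y)) \<and> f ` bul k \<subseteq> bul B"

text \<open>Here \<open>\<alpha> : k \<rightarrow> B\<close> is the structure morphism; \<open>\<alpha> a\<close> is \<open>a\<close> bar.\<close>
definition kspan :: "('b, 'm) obp_scheme \<Rightarrow> ('k, 'n) obp_scheme \<Rightarrow> ('k \<Rightarrow> 'b) \<Rightarrow> 'b set \<Rightarrow> bool" where
  "kspan B k \<alpha> M \<longleftrightarrow> M \<subseteq> bul B \<and>
     (\<forall>a\<in>bul k. \<forall>m\<in>M. mul B (\<alpha> a) m \<in> M) \<and>
     (\<forall>b\<in>bul B. \<forall>as. set as \<subseteq> M \<and> le B b (sumlist B as) \<longrightarrow> b \<in> M)"

definition span :: "('b, 'm) obp_scheme \<Rightarrow> ('k, 'n) obp_scheme \<Rightarrow> ('k \<Rightarrow> 'b) \<Rightarrow> 'b set \<Rightarrow> 'b set" where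
  "span B k \<alpha> A = \<Inter> {M. kspan B k \<alpha> M \<and> A \<subseteq> M}"

definition An :: "('b, 'm) obp_scheme \<Rightarrow> ('k, 'n) obp_scheme \<Rightarrow> ('k \<Rightarrow> 'b) \<Rightarrow> 'b set set" where
  "An B k \<alpha> = {M. \<exists>as. set as \<subseteq> bul B \<and> M = span B k \<alpha> (set as)}"

definition An_add :: "('b, 'm) obp_scheme \<Rightarrow> 'b set \<Rightarrow> 'b set \<Rightarrow> 'b set" where
  "An_add B M1 M2 = {m \<in> bul B. \<exists>xs ys. set xs \<subseteq> M1 \<and> set ys \<subseteq> M2 \<and>
       le B m (add B (sumlist B xs) (sumlist B ys))}"

definition An_mul :: "('b, 'm) obp_scheme \<Rightarrow> 'b set \<Rightarrow> 'b set \<Rightarrow> 'b set" where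
  "An_mul B M1 M2 = {m \<in> bul B. \<exists>ps. set ps \<subseteq> M1 \<times> M2 \<and>
       le B m (sumlist B (map (\<lambda>(x, y). mul B x y) ps))}"

definition An_srng :: "('b, 'm) obp_scheme \<Rightarrow> ('k, 'n) obp_scheme \<Rightarrow> ('k \<Rightarrow> 'b) \<Rightarrow> 'b set srng" where
  "An_srng B k \<alpha> = \<lparr> car = An B k \<alpha>, add = An_add B, mul = An_mul B,
      zer = span B k \<alpha> {}, one = span B k \<alpha> {one B} \<rparr>"

definition Val :: "('b, 'm) obp_scheme \<Rightarrow> ('k, 'n) obp_scheme \<Rightarrow> ('k \<Rightarrow> 'b) \<Rightarrow> ('s, 'p) srng_scheme
                   \<Rightarrow> ('b \<Rightarrow> 's) set" where
  "Val B k \<alpha> S = {w. w \<in> extensional (bul B) \<and>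
      (\<forall>a\<in>bul B. w a \<in> car S) \<and>
      w (zer B) = zer S \<and> w (one B) = one S \<and>
      (\<forall>a\<in>bul B. \<forall>b\<in>bul B. w (mul B a b) = mul S (w a) (w b)) \<and>
      (\<forall>a bs. a \<in> bul B \<longrightarrow> set bs \<subseteq> bul B \<longrightarrow> le B a (sumlist B bs) \<longrightarrow>
          add S (w a) (sumlist S (map w bs)) = sumlist S (map w bs)) \<and>
      (\<forall>c\<in>bul k. add S (w (\<alpha> c)) (one S) = one S)}"

definition An_Hom :: "('b, 'm) obp_scheme \<Rightarrow> ('k, 'n) obp_scheme \<Rightarrow> ('k \<Rightarrow> 'b) \<Rightarrow> ('s, 'p) srng_scheme
                     \<Rightarrow> ('b set \<Rightarrow> 's) set" where
  "An_Hom B k \<alpha> S = {f. f \<in> extensional (An B k \<alpha>) \<and> srng_hom (An_srng B k \<alpha>) S f}"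

definition val_of_hom :: "('b, 'm) obp_scheme \<Rightarrow> ('k, 'n) obp_scheme \<Rightarrow> ('k \<Rightarrow> 'b)
                         \<Rightarrow> ('b set \<Rightarrow> 's) \<Rightarrow> ('b \<Rightarrow> 's)" where
  "val_of_hom B k \<alpha> f = restrict (\<lambda>a. f (span B k \<alpha> {a})) (bul B)"

text \<open>Elements of \<open>\<nat>[B\<^sup>\<bullet>]\<close> (with the zero of \<open>B\<^sup>\<bullet>\<close> identified with 0) are
  multisets over \<open>B\<^sup>\<bullet> - {0}\<close>.\<close>
definition memb :: "('b, 'm) obp_scheme \<Rightarrow> 'b \<Rightarrow> 'b multiset" where
  "memb B a = (if a = zer B then {#} else {#a#})"

definition mmul :: "('b, 'm) obp_scheme \<Rightarrow> 'b multiset \<Rightarrow> 'b multiset \<Rightarrow> 'b multiset" where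
  "mmul B X Y = filter_mset (\<lambda>c. c \<noteq> zer B)
      (sum_mset (image_mset (\<lambda>x. image_mset (mul B x) Y) X))"

text \<open>The order on \<open>(B\<^sup>mon_{k\<le>1})\<^sup>+\<close>: the smallest preorder on \<open>\<nat>[B\<^sup>\<bullet>]\<close> compatible
  with addition and multiplication containing the relations \<open>a \<le> \<Sum> b_j\<close> of \<open>B\<^sup>+\<close>
  and \<open>a\<close>-bar \<open>\<le> 1\<close> for \<open>a \<in> k\<^sup>\<bullet>\<close>.\<close>
inductive mon_le :: "('b, 'm) obp_scheme \<Rightarrow> ('k, 'n) obp_scheme \<Rightarrow> ('k \<Rightarrow> 'b)
                     \<Rightarrow> 'b multiset \<Rightarrow> 'b multiset \<Rightarrow> bool"
  for B k \<alpha> where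
  gen: "a \<in> bul B \<Longrightarrow> set bs \<subseteq> bul B \<Longrightarrow> le B a (sumlist B bs) \<Longrightarrow>
          mon_le B k \<alpha> (memb B a) (sum_list (map (memb B) bs))"
| kle: "c \<in> bul k \<Longrightarrow> mon_le B k \<alpha> (memb B (\<alpha> c)) (memb B (one B))"
| refl: "set_mset X \<subseteq> bul B - {zer B} \<Longrightarrow> mon_le B k \<alpha> X X"
| trans: "mon_le B k \<alpha> X Y \<Longrightarrow> mon_le B k \<alpha> Y Z \<Longrightarrow> mon_le B k \<alpha> X Z"
| addc: "mon_le B k \<alpha> X Y \<Longrightarrow> set_mset Z \<subseteq> bul B - {zer B} \<Longrightarrow>
          mon_le B k \<alpha> (X + Z) (Y + Z)"
| mulc: "mon_le B k \<alpha> X Y \<Longrightarrow> set_mset Z \<subseteq> bul B - {zer B} \<Longrightarrow>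
          mon_le B k \<alpha> (mmul B X Z) (mmul B Y Z)"

text \<open>Elements of \<open>\<bool>[C\<^sup>\<bullet>]\<close> (zero identified with 0) are finite subsets of
  \<open>C\<^sup>\<bullet> - {0}\<close>, with union as addition.\<close>
definition bfin :: "('b, 'm) obp_scheme \<Rightarrow> 'b set set" where
  "bfin B = {X. finite X \<and> X \<subseteq> bul B - {zer B}}"

definition semb :: "('b, 'm) obp_scheme \<Rightarrow> 'b \<Rightarrow> 'b set" where
  "semb B a = (if a = zer B then {} else {a})"

definition smul :: "('b, 'm) obp_scheme \<Rightarrow> 'b set \<Rightarrow> 'b set \<Rightarrow> 'b set" where
  "smul B X Y = {mul B x y | x y. x \<in> X \<and> y \<in> Y} - {zer B}"

text \<open>The congruence on \<open>\<bool>[C\<^sup>\<bullet>]\<close>, \<open>C = B\<^sup>mon_{k\<le>1}\<close>, generated by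
  \<open>a + \<Sum> b_j = \<Sum> b_j\<close> for all relations \<open>a \<le> \<Sum> b_j\<close> in \<open>C\<^sup>+\<close>.\<close>
inductive bend_cong :: "('b, 'm) obp_scheme \<Rightarrow> ('k, 'n) obp_scheme \<Rightarrow> ('k \<Rightarrow> 'b)
                        \<Rightarrow> 'b set \<Rightarrow> 'b set \<Rightarrow> bool"
  for B k \<alpha> where
  gen: "a \<in> bul B \<Longrightarrow> set_mset bs \<subseteq> bul B - {zer B} \<Longrightarrow> mon_le B k \<alpha> (memb B a) bs \<Longrightarrow>
          bend_cong B k \<alpha> (semb B a \<union> set_mset bs) (set_mset bs)"
| refl: "X \<in> bfin B \<Longrightarrow> bend_cong B k \<alpha> X X"
| sym: "bend_cong B k \<alpha> X Y \<Longrightarrow> bend_cong B k \<alpha> Y X"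
| trans: "bend_cong B k \<alpha> X Y \<Longrightarrow> bend_cong B k \<alpha> Y Z \<Longrightarrow> bend_cong B k \<alpha> X Z"
| addc: "bend_cong B k \<alpha> X Y \<Longrightarrow> Z \<in> bfin B \<Longrightarrow> bend_cong B k \<alpha> (X \<union> Z) (Y \<union> Z)"
| mulc: "bend_cong B k \<alpha> X Y \<Longrightarrow> Z \<in> bfin B \<Longrightarrow> bend_cong B k \<alpha> (smul B X Z) (smul B Y Z)"

definition bend_rel :: "('b, 'm) obp_scheme \<Rightarrow> ('k, 'n) obp_scheme \<Rightarrow> ('k \<Rightarrow> 'b) \<Rightarrow> ('b set \<times> 'b set) set" where
  "bend_rel B k \<alpha> = {(X, Y). bend_cong B k \<alpha> X Y}"

definition Bend_srng :: "('b, 'm) obp_scheme \<Rightarrow> ('k, 'n) obp_scheme \<Rightarrow> ('k \<Rightarrow> 'b) \<Rightarrow> 'b set set srng" where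
  "Bend_srng B k \<alpha> = \<lparr>
      car = bfin B // bend_rel B k \<alpha>,
      add = (\<lambda>P Q. \<Union>X\<in>P. \<Union>Y\<in>Q. bend_rel B k \<alpha> `` {X \<union> Y}),
      mul = (\<lambda>P Q. \<Union>X\<in>P. \<Union>Y\<in>Q. bend_rel B k \<alpha> `` {smul B X Y}),
      zer = bend_rel B k \<alpha> `` {{}},
      one = bend_rel B k \<alpha> `` {semb B (one B)} \<rparr>"

end

theory Submission
  imports Defs
begin

text \<open>
  Every finitely generated \<open>k\<close>-span is spanned by a finite subset \<open>X\<close> of \<open>B\<^sup>\<bullet> - {0}\<close>, and sum
  and product in \<open>An(B,k)\<close> become union and elementwise product of generators. The congruence
  defining \<open>Bend\<close> identifies two generating sets exactly when they span the same \<open>k\<close>-span: its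
  generating relations \<open>a \<le> \<Sum> b\<^sub>j\<close> and \<open>a \<le> 1\<close> preserve spans, and conversely everything in the
  span of \<open>Y\<close> can be absorbed into \<open>Y\<close>. So \<open>M \<mapsto> {X. \<langle>X\<rangle> = M}\<close> is the isomorphism.

  A homomorphism \<open>f : An(B,k) \<rightarrow> S\<close> is determined by the values \<open>f \<langle>a\<rangle>\<close>, which form a valuation
  because \<open>\<langle>a\<rangle> + \<langle>b\<^sub>1,\<dots>,b\<^sub>n\<rangle> = \<langle>b\<^sub>1,\<dots>,b\<^sub>n\<rangle>\<close> whenever \<open>a \<le> \<Sum> b\<^sub>j\<close>. Conversely, for idempotent \<open>S\<close>
  a valuation \<open>w\<close> extends to \<open>\<langle>a\<^sub>1,\<dots>,a\<^sub>n\<rangle> \<mapsto> \<Sum> w a\<^sub>i\<close>, which is well defined since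
  \<open>w\<close> is bounded by \<open>\<Sum> w a\<^sub>i\<close> on the whole span.
\<close>

lemma sumlist_Nil [simp]: "sumlist R [] = zer R"
  by (simp add: sumlist_def)

lemma sumlist_Cons [simp]: "sumlist R (x # xs) = add R x (sumlist R xs)"
  by (simp add: sumlist_def)

lemma UN_UN_constant_eq:
  "a \<in> A \<Longrightarrow> b \<in> C \<Longrightarrow> (\<And>x y. x \<in> A \<Longrightarrow> y \<in> C \<Longrightarrow> f x y = c) \<Longrightarrow> (\<Union>x\<in>A. \<Union>y\<in>C. f x y) = c"
  by (intro UN_constant_eq[of a] ballI UN_constant_eq[of b]) auto

locale comm_srng_struct =
  fixes R :: "('a, 'm) srng_scheme"
  assumes comm_srng: "comm_srng R"
begin

lemma zer_closed [simp]: "zer R \<in> car R"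
  and one_closed [simp]: "one R \<in> car R"
  and add_closed [simp]: "x \<in> car R \<Longrightarrow> y \<in> car R \<Longrightarrow> add R x y \<in> car R"
  and mul_closed [simp]: "x \<in> car R \<Longrightarrow> y \<in> car R \<Longrightarrow> mul R x y \<in> car R"
  using comm_srng unfolding comm_srng_def by blast+

lemma add_assoc: "x \<in> car R \<Longrightarrow> y \<in> car R \<Longrightarrow> z \<in> car R \<Longrightarrow>
    add R (add R x y) z = add R x (add R y z)"
  and mul_assoc: "x \<in> car R \<Longrightarrow> y \<in> car R \<Longrightarrow> z \<in> car R \<Longrightarrow>
    mul R (mul R x y) z = mul R x (mul R y z)"
  and distrib_left: "x \<in> car R \<Longrightarrow> y \<in> car R \<Longrightarrow> z \<in> car R \<Longrightarrow>
    mul R x (add R y z) = add R (mul R x y) (mul R x z)"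
  and add_commute: "x \<in> car R \<Longrightarrow> y \<in> car R \<Longrightarrow> add R x y = add R y x"
  and mul_commute: "x \<in> car R \<Longrightarrow> y \<in> car R \<Longrightarrow> mul R x y = mul R y x"
  using comm_srng unfolding comm_srng_def by blast+

lemma add_zero_left [simp]: "x \<in> car R \<Longrightarrow> add R (zer R) x = x"
  and mul_one_left [simp]: "x \<in> car R \<Longrightarrow> mul R (one R) x = x"
  and mul_zero_left [simp]: "x \<in> car R \<Longrightarrow> mul R (zer R) x = zer R"
  using comm_srng unfolding comm_srng_def by blast+

lemma add_zero_right [simp]: "x \<in> car R \<Longrightarrow> add R x (zer R) = x"
  and mul_one_right [simp]: "x \<in> car R \<Longrightarrow> mul R x (one R) = x"
  and mul_zero_right [simp]: "x \<in> car R \<Longrightarrow> mul R x (zer R) = zer R"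
  by (simp_all add: add_commute[of x] mul_commute[of x])

lemma distrib_right: "x \<in> car R \<Longrightarrow> y \<in> car R \<Longrightarrow> z \<in> car R \<Longrightarrow>
    mul R (add R x y) z = add R (mul R x z) (mul R y z)"
  by (simp add: distrib_left mul_commute)

lemma add_left_commute: "x \<in> car R \<Longrightarrow> y \<in> car R \<Longrightarrow> z \<in> car R \<Longrightarrow>
    add R x (add R y z) = add R y (add R x z)"
  by (metis add_assoc add_commute)

lemma sumlist_closed [simp]: "set xs \<subseteq> car R \<Longrightarrow> sumlist R xs \<in> car R"
  by (induction xs) auto

lemma sumlist_append: "set xs \<subseteq> car R \<Longrightarrow> set ys \<subseteq> car R \<Longrightarrow>
    sumlist R (xs @ ys) = add R (sumlist R xs) (sumlist R ys)"
  by (induction xs) (auto simp: add_assoc)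

lemma sumlist_partition: "set xs \<subseteq> car R \<Longrightarrow>
    sumlist R xs = add R (sumlist R (filter P xs)) (sumlist R (filter (\<lambda>x. \<not> P x) xs))"
proof (induction xs)
  case (Cons x xs)
  have "set (filter P xs) \<subseteq> car R" "set (filter (\<lambda>x. \<not> P x) xs) \<subseteq> car R"
    using Cons.prems by auto
  with Cons show ?case
    by (auto simp: add_assoc add_left_commute[of x])
qed simp

lemma sumlist_mult_left: "z \<in> car R \<Longrightarrow> set xs \<subseteq> car R \<Longrightarrow>
    mul R z (sumlist R xs) = sumlist R (map (mul R z) xs)"
  by (induction xs) (auto simp: distrib_left)

lemma sumlist_mult_right: "z \<in> car R \<Longrightarrow> set xs \<subseteq> car R \<Longrightarrow>
    mul R (sumlist R xs) z = sumlist R (map (\<lambda>x. mul R x z) xs)"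
  by (induction xs) (auto simp: distrib_right)

lemma sumlist_mult_sumlist: "set xs \<subseteq> car R \<Longrightarrow> set ys \<subseteq> car R \<Longrightarrow>
    mul R (sumlist R xs) (sumlist R ys) = sumlist R (concat (map (\<lambda>x. map (mul R x) ys) xs))"
proof (induction xs)
  case (Cons x xs)
  have xs: "set (concat (map (\<lambda>x. map (mul R x) ys) xs)) \<subseteq> car R"
    using Cons.prems by (auto simp: subset_iff)
  have "mul R (sumlist R (x # xs)) (sumlist R ys)
      = add R (mul R x (sumlist R ys)) (mul R (sumlist R xs) (sumlist R ys))"
    using Cons.prems by (simp add: distrib_right)
  also have "\<dots> = add R (sumlist R (map (mul R x) ys))
      (sumlist R (concat (map (\<lambda>x. map (mul R x) ys) xs)))"
    using Cons by (simp add: sumlist_mult_left)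
  also have "\<dots> = sumlist R (concat (map (\<lambda>x. map (mul R x) ys) (x # xs)))"
  proof -
    have "set (map (mul R x) ys) \<subseteq> car R"
      using Cons.prems by auto
    then show ?thesis
      using sumlist_append[OF _ xs] by simp
  qed
  finally show ?case .
qed simp

end

text \<open>In an idempotent semiring \<open>add S x y = y\<close> is the natural order \<open>x \<le> y\<close>.\<close>

locale idem_srng_struct = comm_srng_struct S for S :: "('s, 'p) srng_scheme" +
  assumes one_add_one: "add S (one S) (one S) = one S"
begin

lemma add_idem [simp]: "x \<in> car S \<Longrightarrow> add S x x = x"
  using distrib_left[of x "one S" "one S"] by (simp add: one_add_one)

lemma absorb_trans: "x \<in> car S \<Longrightarrow> y \<in> car S \<Longrightarrow> z \<in> car S \<Longrightarrow>
    add S x y = y \<Longrightarrow> add S y z = z \<Longrightarrow> add S x z = z"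
  by (metis add_assoc)

lemma absorb_antisym: "x \<in> car S \<Longrightarrow> y \<in> car S \<Longrightarrow> add S x y = y \<Longrightarrow> add S y x = x \<Longrightarrow> x = y"
  by (metis add_commute)

lemma absorb_sumlist_member: "set xs \<subseteq> car S \<Longrightarrow> x \<in> set xs \<Longrightarrow> add S x (sumlist S xs) = sumlist S xs"
proof (induction xs)
  case (Cons y ys)
  then have "x \<in> car S"
    by auto
  show ?case
  proof (cases "x = y")
    case True
    with \<open>x \<in> car S\<close> Cons.prems show ?thesis
      by (simp flip: add_assoc)
  next
    case False
    with \<open>x \<in> car S\<close> Cons show ?thesis
      by (simp add: add_left_commute[of x y])
  qed
qed simp

lemma sumlist_absorb: "set xs \<subseteq> car S \<Longrightarrow> t \<in> car S \<Longrightarrow> (\<forall>x\<in>set xs. add S x t = t) \<Longrightarrow>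
    add S (sumlist S xs) t = t"
  by (induction xs) (auto simp: add_assoc)

end

definition sum_downset :: "('b, 'm) obp_scheme \<Rightarrow> 'b set \<Rightarrow> 'b set" where
  "sum_downset B G = {m \<in> bul B. \<exists>xs. set xs \<subseteq> G \<and> le B m (sumlist B xs)}"

lemma sum_downsetI: "m \<in> bul B \<Longrightarrow> set xs \<subseteq> G \<Longrightarrow> le B m (sumlist B xs) \<Longrightarrow> m \<in> sum_downset B G"
  unfolding sum_downset_def by blast

lemma sum_downsetE:
  assumes "m \<in> sum_downset B G"
  obtains xs where "m \<in> bul B" "set xs \<subseteq> G" "le B m (sumlist B xs)"
  using assms unfolding sum_downset_def by blast

locale ordered_blueprint_struct = comm_srng_struct B for B :: "('a, 'm) obp_scheme" +
  assumes ordered_blueprint: "ordered_blueprint B"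
begin

lemma le_refl: "x \<in> car B \<Longrightarrow> le B x x"
  and le_carrier: "le B x y \<Longrightarrow> x \<in> car B \<and> y \<in> car B"
  using ordered_blueprint unfolding ordered_blueprint_def by blast+

lemma le_trans: "le B x y \<Longrightarrow> le B y z \<Longrightarrow> le B x z"
  using ordered_blueprint le_carrier unfolding ordered_blueprint_def by blast

lemma add_right_mono: "le B x y \<Longrightarrow> z \<in> car B \<Longrightarrow> le B (add B x z) (add B y z)"
  and mul_right_mono: "le B x y \<Longrightarrow> z \<in> car B \<Longrightarrow> le B (mul B x z) (mul B y z)"
  using ordered_blueprint le_carrier unfolding ordered_blueprint_def by blast+

lemma mul_left_mono: "le B x y \<Longrightarrow> z \<in> car B \<Longrightarrow> le B (mul B z x) (mul B z y)"
  using mul_right_mono le_carrier by (metis mul_commute)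

lemma add_mono:
  assumes "le B a b" and "le B c d"
  shows "le B (add B a c) (add B b d)"
proof -
  have car: "a \<in> car B" "b \<in> car B" "c \<in> car B" "d \<in> car B"
    using assms le_carrier by blast+
  have "le B (add B a c) (add B b c)"
    using add_right_mono[OF assms(1)] car by simp
  moreover have "le B (add B c b) (add B d b)"
    using add_right_mono[OF assms(2)] car by simp
  ultimately show ?thesis
    using le_trans car by (simp add: add_commute[of _ b])
qed

lemma bul_subset_car: "bul B \<subseteq> car B"
  and zer_bul [simp]: "zer B \<in> bul B"
  and one_bul [simp]: "one B \<in> bul B"
  and mul_bul [simp]: "x \<in> bul B \<Longrightarrow> y \<in> bul B \<Longrightarrow> mul B x y \<in> bul B"
  using ordered_blueprint unfolding ordered_blueprint_def by blast+

lemma bul_car [simp]: "x \<in> bul B \<Longrightarrow> x \<in> car B"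
  using bul_subset_car by blast

lemma subset_bul_imp_subset_car [simp]: "X \<subseteq> bul B \<Longrightarrow> X \<subseteq> car B"
  using bul_subset_car by blast

lemma sumlist_le_sum_downset:
  assumes "G \<subseteq> car B" and "set ms \<subseteq> sum_downset B G"
  shows "\<exists>xs. set xs \<subseteq> G \<and> le B (sumlist B ms) (sumlist B xs)"
  using assms(2)
proof (induction ms)
  case Nil
  have "le B (sumlist B []) (sumlist B [])"
    by (simp add: le_refl)
  then show ?case
    by (metis empty_set empty_subsetI)
next
  case (Cons m ms)
  then obtain xs where xs: "set xs \<subseteq> G" "le B (sumlist B ms) (sumlist B xs)"
    by auto
  obtain ys where ys: "set ys \<subseteq> G" "le B m (sumlist B ys)"
    using Cons.prems by (auto elim: sum_downsetE)
  have "le B (sumlist B (m # ms)) (add B (sumlist B ys) (sumlist B xs))"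
    using add_mono[OF ys(2) xs(2)] by simp
  also have "add B (sumlist B ys) (sumlist B xs) = sumlist B (ys @ xs)"
    using xs ys assms(1) by (simp add: sumlist_append)
  finally show ?case
    using xs ys by (metis set_append Un_subset_iff)
qed

lemma An_add_eq_sum_downset:
  assumes "M1 \<subseteq> car B" and "M2 \<subseteq> car B"
  shows "An_add B M1 M2 = sum_downset B (M1 \<union> M2)"
proof (intro set_eqI iffI)
  fix m
  assume "m \<in> An_add B M1 M2"
  then obtain xs ys where "m \<in> bul B" "set xs \<subseteq> M1" "set ys \<subseteq> M2"
    "le B m (add B (sumlist B xs) (sumlist B ys))"
    unfolding An_add_def by blast
  with assms show "m \<in> sum_downset B (M1 \<union> M2)"
    by (intro sum_downsetI[where xs = "xs @ ys"]) (auto simp: sumlist_append)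
next
  fix m
  assume "m \<in> sum_downset B (M1 \<union> M2)"
  then obtain zs where zs: "m \<in> bul B" "set zs \<subseteq> M1 \<union> M2" "le B m (sumlist B zs)"
    by (rule sum_downsetE)
  let ?xs = "filter (\<lambda>z. z \<in> M1) zs" and ?ys = "filter (\<lambda>z. z \<notin> M1) zs"
  have "sumlist B zs = add B (sumlist B ?xs) (sumlist B ?ys)"
    using zs(2) assms by (intro sumlist_partition) blast
  moreover have "set ?xs \<subseteq> M1" "set ?ys \<subseteq> M2"
    using zs(2) by auto
  ultimately show "m \<in> An_add B M1 M2"
    using zs unfolding An_add_def by (metis (mono_tags, lifting) mem_Collect_eq)
qed

lemma An_mul_eq_sum_downset:
  "An_mul B M1 M2 = sum_downset B {mul B x y |x y. x \<in> M1 \<and> y \<in> M2}"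
proof -
  have products: "{mul B x y |x y. x \<in> M1 \<and> y \<in> M2} = (\<lambda>(x, y). mul B x y) ` (M1 \<times> M2)"
    by auto
  have "(\<exists>ps. set ps \<subseteq> M1 \<times> M2 \<and> le B m (sumlist B (map (\<lambda>(x, y). mul B x y) ps)))
      \<longleftrightarrow> (\<exists>zs. zs \<in> lists ((\<lambda>(x, y). mul B x y) ` (M1 \<times> M2)) \<and> le B m (sumlist B zs))" for m
    unfolding lists_image by blast
  then show ?thesis
    unfolding An_mul_def sum_downset_def products by (auto simp: in_lists_conv_set)
qed

end

locale blue_algebra = B: ordered_blueprint_struct B
  for B :: "('b, 'm) obp_scheme" +
  fixes k :: "('k, 'n) obp_scheme" and \<alpha> :: "'k \<Rightarrow> 'b"
  assumes alpha_bul [simp]: "c \<in> bul k \<Longrightarrow> \<alpha> c \<in> bul B"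
begin

lemma kspanI:
  assumes "M \<subseteq> bul B"
    and "\<And>c m. c \<in> bul k \<Longrightarrow> m \<in> M \<Longrightarrow> mul B (\<alpha> c) m \<in> M"
    and "\<And>b as. b \<in> bul B \<Longrightarrow> set as \<subseteq> M \<Longrightarrow> le B b (sumlist B as) \<Longrightarrow> b \<in> M"
  shows "kspan B k \<alpha> M"
  unfolding kspan_def using assms by blast

lemma kspan_bul: "kspan B k \<alpha> (bul B)"
  unfolding kspan_def by auto

lemma kspan_span:
  assumes "A \<subseteq> bul B"
  shows "kspan B k \<alpha> (span B k \<alpha> A)"
proof (rule kspanI)
  show "span B k \<alpha> A \<subseteq> bul B"
    unfolding span_def using assms kspan_bul by blast
next
  fix c m
  assume "c \<in> bul k" "m \<in> span B k \<alpha> A"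
  then show "mul B (\<alpha> c) m \<in> span B k \<alpha> A"
    unfolding span_def kspan_def by blast
next
  fix b as
  assume "b \<in> bul B" "set as \<subseteq> span B k \<alpha> A" "le B b (sumlist B as)"
  then show "b \<in> span B k \<alpha> A"
    unfolding span_def kspan_def by blast
qed

lemma span_superset: "A \<subseteq> bul B \<Longrightarrow> A \<subseteq> span B k \<alpha> A"
  unfolding span_def by blast

lemma span_least: "kspan B k \<alpha> M \<Longrightarrow> A \<subseteq> M \<Longrightarrow> span B k \<alpha> A \<subseteq> M"
  unfolding span_def by blast

lemma span_subset_bul: "A \<subseteq> bul B \<Longrightarrow> span B k \<alpha> A \<subseteq> bul B"
  by (rule span_least[OF kspan_bul])

lemma span_lower:
  "A \<subseteq> bul B \<Longrightarrow> b \<in> bul B \<Longrightarrow> set as \<subseteq> span B k \<alpha> A \<Longrightarrow> le B b (sumlist B as) \<Longrightarrow>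
    b \<in> span B k \<alpha> A"
  using kspan_span unfolding kspan_def by blast

lemma span_smult: "A \<subseteq> bul B \<Longrightarrow> c \<in> bul k \<Longrightarrow> m \<in> span B k \<alpha> A \<Longrightarrow> mul B (\<alpha> c) m \<in> span B k \<alpha> A"
  using kspan_span unfolding kspan_def by blast

lemma zer_in_span: "A \<subseteq> bul B \<Longrightarrow> zer B \<in> span B k \<alpha> A"
  using span_lower[of A "zer B" "[]"] by (simp add: B.le_refl)

lemma span_subset_span: "A \<subseteq> span B k \<alpha> A' \<Longrightarrow> A' \<subseteq> bul B \<Longrightarrow> span B k \<alpha> A \<subseteq> span B k \<alpha> A'"
  using span_least kspan_span by blast

lemma span_mono: "A \<subseteq> A' \<Longrightarrow> A' \<subseteq> bul B \<Longrightarrow> span B k \<alpha> A \<subseteq> span B k \<alpha> A'"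
  using span_subset_span span_superset by blast

lemma span_eqI:
  "A \<subseteq> span B k \<alpha> A' \<Longrightarrow> A' \<subseteq> span B k \<alpha> A \<Longrightarrow> A \<subseteq> bul B \<Longrightarrow> A' \<subseteq> bul B \<Longrightarrow>
    span B k \<alpha> A = span B k \<alpha> A'"
  by (simp add: span_subset_span subset_antisym)

lemma span_Diff_zer:
  assumes "A \<subseteq> bul B"
  shows "span B k \<alpha> (A - {zer B}) = span B k \<alpha> A"
proof (rule span_eqI)
  have "A - {zer B} \<subseteq> bul B"
    using assms by blast
  then have "A - {zer B} \<subseteq> span B k \<alpha> (A - {zer B})" "zer B \<in> span B k \<alpha> (A - {zer B})"
    by (rule span_superset, rule zer_in_span)
  then show "A \<subseteq> span B k \<alpha> (A - {zer B})"
    by blast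
qed (use assms span_superset[OF assms] in auto)

lemma span_eq_sum_downset:
  assumes G: "G \<subseteq> bul B" and stable: "\<And>c g. c \<in> bul k \<Longrightarrow> g \<in> G \<Longrightarrow> mul B (\<alpha> c) g \<in> G"
  shows "span B k \<alpha> G = sum_downset B G"
proof
  have "kspan B k \<alpha> (sum_downset B G)"
  proof (rule kspanI)
    show "sum_downset B G \<subseteq> bul B"
      unfolding sum_downset_def by blast
  next
    fix c m
    assume c: "c \<in> bul k" and m: "m \<in> sum_downset B G"
    obtain xs where xs: "m \<in> bul B" "set xs \<subseteq> G" "le B m (sumlist B xs)"
      using m by (rule sum_downsetE)
    have "le B (mul B (\<alpha> c) m) (mul B (\<alpha> c) (sumlist B xs))"
      using B.mul_left_mono[OF xs(3)] c by simp
    also have "mul B (\<alpha> c) (sumlist B xs) = sumlist B (map (mul B (\<alpha> c)) xs)"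
      using c xs G by (simp add: B.sumlist_mult_left)
    finally show "mul B (\<alpha> c) m \<in> sum_downset B G"
      using c xs stable by (intro sum_downsetI) auto
  next
    fix b as
    assume b: "b \<in> bul B" "set as \<subseteq> sum_downset B G" "le B b (sumlist B as)"
    obtain xs where "set xs \<subseteq> G" "le B (sumlist B as) (sumlist B xs)"
      using B.sumlist_le_sum_downset[OF B.subset_bul_imp_subset_car[OF G] b(2)] by blast
    then show "b \<in> sum_downset B G"
      using b(1) B.le_trans[OF b(3)] by (blast intro: sum_downsetI)
  qed
  moreover have "G \<subseteq> sum_downset B G"
    using G by (auto intro!: sum_downsetI[where xs = "[_]"] simp: B.le_refl)
  ultimately show "span B k \<alpha> G \<subseteq> sum_downset B G"
    by (rule span_least)
next
  show "sum_downset B G \<subseteq> span B k \<alpha> G"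
  proof
    fix m
    assume "m \<in> sum_downset B G"
    then obtain xs where "m \<in> bul B" "set xs \<subseteq> G" "le B m (sumlist B xs)"
      by (rule sum_downsetE)
    then show "m \<in> span B k \<alpha> G"
      using span_lower[OF G] span_superset[OF G] by blast
  qed
qed

lemma kspan_mult_preimage:
  assumes M: "kspan B k \<alpha> M" and z: "z \<in> bul B"
  shows "kspan B k \<alpha> {x \<in> bul B. mul B x z \<in> M}"
proof (rule kspanI)
  fix c x
  assume c: "c \<in> bul k" and x: "x \<in> {x \<in> bul B. mul B x z \<in> M}"
  then have "mul B (\<alpha> c) (mul B x z) \<in> M"
    using M unfolding kspan_def by blast
  then show "mul B (\<alpha> c) x \<in> {x \<in> bul B. mul B x z \<in> M}"
    using c x z by (simp add: B.mul_assoc)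
next
  fix b as
  assume b: "b \<in> bul B" and as: "set as \<subseteq> {x \<in> bul B. mul B x z \<in> M}"
    and le: "le B b (sumlist B as)"
  have "le B (mul B b z) (mul B (sumlist B as) z)"
    using B.mul_right_mono[OF le] z by simp
  also have "mul B (sumlist B as) z = sumlist B (map (\<lambda>x. mul B x z) as)"
    using as z by (intro B.sumlist_mult_right) auto
  finally have "le B (mul B b z) (sumlist B (map (\<lambda>x. mul B x z) as))" .
  moreover have "set (map (\<lambda>x. mul B x z) as) \<subseteq> M"
    using as by auto
  ultimately have "mul B b z \<in> M"
    using M b z unfolding kspan_def by (meson B.mul_bul)
  then show "b \<in> {x \<in> bul B. mul B x z \<in> M}"
    using b by blast
qed auto

lemma smul_subset_bul: "X \<subseteq> bul B \<Longrightarrow> Y \<subseteq> bul B \<Longrightarrow> smul B X Y \<subseteq> bul B"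
  unfolding smul_def by (auto simp: subset_iff)

lemma mul_right_mem_if_generators:
  assumes M: "kspan B k \<alpha> M" and z: "z \<in> bul B" and G: "G \<subseteq> bul B"
    and gen: "\<And>g. g \<in> G \<Longrightarrow> mul B g z \<in> M" and x: "x \<in> span B k \<alpha> G"
  shows "mul B x z \<in> M"
proof -
  have "G \<subseteq> {x \<in> bul B. mul B x z \<in> M}"
    using G gen by blast
  then have "span B k \<alpha> G \<subseteq> {x \<in> bul B. mul B x z \<in> M}"
    using span_least kspan_mult_preimage[OF M z] by blast
  then show ?thesis
    using x by blast
qed

lemma mul_mem_span_smul:
  assumes X: "X \<subseteq> bul B" and Y: "Y \<subseteq> bul B"
    and x: "x \<in> span B k \<alpha> X" and y: "y \<in> span B k \<alpha> Y"
  shows "mul B x y \<in> span B k \<alpha> (smul B X Y)"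
proof -
  let ?P = "span B k \<alpha> (smul B X Y)"
  have P: "kspan B k \<alpha> ?P"
    using kspan_span smul_subset_bul[OF X Y] .
  have generators: "mul B x0 y0 \<in> ?P" if "x0 \<in> X" "y0 \<in> Y" for x0 y0
  proof (cases "mul B x0 y0 = zer B")
    case True
    then show ?thesis
      using zer_in_span smul_subset_bul[OF X Y] by simp
  next
    case False
    then have "mul B x0 y0 \<in> smul B X Y"
      using that unfolding smul_def by blast
    then show ?thesis
      using span_superset smul_subset_bul[OF X Y] by blast
  qed
  have "mul B y x0 \<in> ?P" if x0: "x0 \<in> X" for x0
  proof (rule mul_right_mem_if_generators[OF P _ Y _ y])
    show "x0 \<in> bul B"
      using x0 X by blast
    then show "mul B y0 x0 \<in> ?P" if "y0 \<in> Y" for y0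
      using generators[OF x0 that] B.mul_commute[of y0 x0] that Y by auto
  qed
  moreover have "y \<in> bul B"
    using y span_subset_bul[OF Y] by blast
  ultimately show ?thesis
    using mul_right_mem_if_generators[OF P _ X _ x] X B.mul_commute[of _ y] by (simp add: subset_iff)
qed

lemma An_add_span:
  assumes X: "X \<subseteq> bul B" and Y: "Y \<subseteq> bul B"
  shows "An_add B (span B k \<alpha> X) (span B k \<alpha> Y) = span B k \<alpha> (X \<union> Y)"
proof -
  have spans: "span B k \<alpha> X \<union> span B k \<alpha> Y \<subseteq> bul B"
    using span_subset_bul X Y by blast
  have "An_add B (span B k \<alpha> X) (span B k \<alpha> Y) = sum_downset B (span B k \<alpha> X \<union> span B k \<alpha> Y)"
    using spans by (intro B.An_add_eq_sum_downset) auto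
  also have "\<dots> = span B k \<alpha> (span B k \<alpha> X \<union> span B k \<alpha> Y)"
    using spans span_smult X Y by (intro span_eq_sum_downset[symmetric]) blast+
  also have "\<dots> = span B k \<alpha> (X \<union> Y)"
  proof (rule span_eqI)
    have "X \<union> Y \<subseteq> bul B"
      using X Y by blast
    then show "span B k \<alpha> X \<union> span B k \<alpha> Y \<subseteq> span B k \<alpha> (X \<union> Y)"
      using span_mono[of X "X \<union> Y"] span_mono[of Y "X \<union> Y"] by blast
    show "X \<union> Y \<subseteq> span B k \<alpha> (span B k \<alpha> X \<union> span B k \<alpha> Y)"
      using span_superset[OF X] span_superset[OF Y] span_superset[OF spans] by blast
  qed (use spans X Y in auto)
  finally show ?thesis .
qed

lemma An_mul_span:
  assumes X: "X \<subseteq> bul B" and Y: "Y \<subseteq> bul B"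
  shows "An_mul B (span B k \<alpha> X) (span B k \<alpha> Y) = span B k \<alpha> (smul B X Y)"
proof -
  let ?P = "{mul B x y |x y. x \<in> span B k \<alpha> X \<and> y \<in> span B k \<alpha> Y}"
  have P: "?P \<subseteq> bul B"
    using span_subset_bul[OF X] span_subset_bul[OF Y] by (blast intro: B.mul_bul)
  have stable: "mul B (\<alpha> c) p \<in> ?P" if "c \<in> bul k" "p \<in> ?P" for c p
  proof -
    obtain x y where "p = mul B x y" "x \<in> span B k \<alpha> X" "y \<in> span B k \<alpha> Y"
      using \<open>p \<in> ?P\<close> by blast
    moreover have "x \<in> bul B" "y \<in> bul B"
      using calculation span_subset_bul X Y by blast+
    ultimately show ?thesis
      using that span_smult[OF X] by (auto simp: B.mul_assoc[symmetric])
  qed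
  have "An_mul B (span B k \<alpha> X) (span B k \<alpha> Y) = span B k \<alpha> ?P"
    using span_eq_sum_downset[OF P stable] B.An_mul_eq_sum_downset by simp
  also have "\<dots> = span B k \<alpha> (smul B X Y)"
  proof (rule span_eqI)
    show "?P \<subseteq> span B k \<alpha> (smul B X Y)"
      using mul_mem_span_smul[OF X Y] by blast
    show "smul B X Y \<subseteq> span B k \<alpha> ?P"
      using span_superset[OF P] span_superset[OF X] span_superset[OF Y]
      unfolding smul_def by blast
  qed (use P smul_subset_bul[OF X Y] in auto)
  finally show ?thesis .
qed

lemma le_sumlist_mem_span:
  "a \<in> bul B \<Longrightarrow> set bs \<subseteq> bul B \<Longrightarrow> le B a (sumlist B bs) \<Longrightarrow> a \<in> span B k \<alpha> (set bs)"
  using span_lower span_superset by blast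

lemma alpha_mem_span_one: "c \<in> bul k \<Longrightarrow> \<alpha> c \<in> span B k \<alpha> {one B}"
  using span_smult[of "{one B}" c "one B"] span_superset[of "{one B}"] by simp

lemma smul_subset_span_smul:
  "X \<subseteq> span B k \<alpha> Y \<Longrightarrow> Y \<subseteq> bul B \<Longrightarrow> Z \<subseteq> bul B \<Longrightarrow> smul B X Z \<subseteq> span B k \<alpha> (smul B Y Z)"
  unfolding smul_def[of B X Z] using mul_mem_span_smul span_superset by blast

lemma zer_notin_smul: "zer B \<notin> smul B X Y"
  unfolding smul_def by blast

lemma finite_smul: "finite X \<Longrightarrow> finite Y \<Longrightarrow> finite (smul B X Y)"
proof -
  assume "finite X" "finite Y"
  moreover have "smul B X Y \<subseteq> (\<lambda>(x, y). mul B x y) ` (X \<times> Y)"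
    unfolding smul_def by auto
  ultimately show ?thesis
    by (meson finite_SigmaI finite_imageI finite_subset)
qed

lemma smul_bfin:
  assumes "X \<in> bfin B" and "Y \<in> bfin B"
  shows "smul B X Y \<in> bfin B"
proof -
  have "X \<subseteq> bul B" "Y \<subseteq> bul B" "finite X" "finite Y"
    using assms unfolding bfin_def by auto
  then have "finite (smul B X Y)" "smul B X Y \<subseteq> bul B"
    using finite_smul smul_subset_bul by auto
  then show ?thesis
    using zer_notin_smul unfolding bfin_def by blast
qed

lemma semb_bfin: "a \<in> bul B \<Longrightarrow> semb B a \<in> bfin B"
  by (simp add: semb_def bfin_def)

lemma span_semb: "a \<in> bul B \<Longrightarrow> span B k \<alpha> (semb B a) = span B k \<alpha> {a}"
  using span_Diff_zer[of "{a}"] by (cases "a = zer B") (simp_all add: semb_def)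

lemma set_mset_memb: "set_mset (memb B a) = semb B a"
  by (simp add: memb_def semb_def)

lemma set_mset_sum_list_memb: "set_mset (sum_list (map (memb B) bs)) = set bs - {zer B}"
  by (induction bs) (auto simp: memb_def)

lemma set_mset_mmul: "set_mset (mmul B X Y) = smul B (set_mset X) (set_mset Y)"
  by (auto simp: mmul_def smul_def)

lemma mon_le_span:
  "mon_le B k \<alpha> X Y \<Longrightarrow>
    set_mset X \<subseteq> bul B - {zer B} \<and> set_mset Y \<subseteq> bul B - {zer B} \<and>
    set_mset X \<subseteq> span B k \<alpha> (set_mset Y)"
proof (induction rule: mon_le.induct)
  case (gen a bs)
  then have "a \<in> span B k \<alpha> (set bs - {zer B})"
    using le_sumlist_mem_span span_Diff_zer by simp
  moreover have "semb B a \<subseteq> {a}"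
    by (simp add: semb_def)
  ultimately have "set_mset (memb B a) \<subseteq> span B k \<alpha> (set_mset (sum_list (map (memb B) bs)))"
    by (simp only: set_mset_memb set_mset_sum_list_memb) blast
  with gen show ?case
    by (auto simp: set_mset_memb set_mset_sum_list_memb semb_def)
next
  case (kle c)
  have "\<alpha> c \<in> span B k \<alpha> (semb B (one B))"
    using alpha_mem_span_one[OF kle] span_semb[of "one B"] by simp
  with kle show ?case
    by (auto simp: set_mset_memb semb_def)
next
  case (refl X)
  then show ?case
    using span_superset[of "set_mset X"] by blast
next
  case (trans X Y Z)
  then show ?case
    using span_subset_span[of "set_mset Y" "set_mset Z"] by blast
next
  case (addc X Y Z)
  then have "set_mset Y \<union> set_mset Z \<subseteq> bul B"
    by blast
  then have "span B k \<alpha> (set_mset Y) \<subseteq> span B k \<alpha> (set_mset Y \<union> set_mset Z)"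
    "set_mset Z \<subseteq> span B k \<alpha> (set_mset Y \<union> set_mset Z)"
    using span_mono[of "set_mset Y"] span_superset[of "set_mset Y \<union> set_mset Z"] by auto
  with addc show ?case
    by auto
next
  case (mulc X Y Z)
  let ?X = "set_mset X" and ?Y = "set_mset Y" and ?Z = "set_mset Z"
  have bul: "?X \<subseteq> bul B" "?Y \<subseteq> bul B" "?Z \<subseteq> bul B"
    using mulc by blast+
  have "smul B ?X ?Z \<subseteq> span B k \<alpha> (smul B ?Y ?Z)"
    using smul_subset_span_smul[of ?X ?Y ?Z] mulc.IH bul by blast
  moreover have "smul B ?X ?Z \<subseteq> bul B - {zer B}" "smul B ?Y ?Z \<subseteq> bul B - {zer B}"
    using smul_subset_bul[OF bul(1,3)] smul_subset_bul[OF bul(2,3)] zer_notin_smul by blast+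
  ultimately show ?case
    unfolding set_mset_mmul by blast
qed

lemma bend_cong_span:
  "bend_cong B k \<alpha> X Y \<Longrightarrow> X \<in> bfin B \<and> Y \<in> bfin B \<and> span B k \<alpha> X = span B k \<alpha> Y"
proof (induction rule: bend_cong.induct)
  case (gen a bs)
  have bs: "set_mset bs \<subseteq> bul B"
    using gen.hyps(2) by blast
  have "semb B a \<subseteq> span B k \<alpha> (set_mset bs)"
    using mon_le_span[OF gen.hyps(3)] by (simp add: set_mset_memb)
  moreover have "semb B a \<subseteq> bul B"
    using gen.hyps(1) by (simp add: semb_def)
  ultimately have "span B k \<alpha> (semb B a \<union> set_mset bs) = span B k \<alpha> (set_mset bs)"
    using bs span_superset[of "set_mset bs"] span_superset[of "semb B a \<union> set_mset bs"]
    by (intro span_eqI) auto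
  with gen.hyps show ?case
    by (auto simp: bfin_def semb_def)
next
  case (addc X Y Z)
  then have bul: "X \<subseteq> bul B" "Y \<subseteq> bul B" "Z \<subseteq> bul B"
    by (auto simp: bfin_def)
  have "X \<union> Z \<subseteq> span B k \<alpha> (Y \<union> Z)" "Y \<union> Z \<subseteq> span B k \<alpha> (X \<union> Z)"
    using addc bul span_superset[of X] span_superset[of Y] span_superset[of "X \<union> Z"]
      span_superset[of "Y \<union> Z"] span_mono[of X "X \<union> Z"] span_mono[of Y "Y \<union> Z"]
    by auto
  then have "span B k \<alpha> (X \<union> Z) = span B k \<alpha> (Y \<union> Z)"
    using bul by (intro span_eqI) auto
  with addc show ?case
    by (auto simp: bfin_def)
next
  case (mulc X Y Z)
  then have bul: "X \<subseteq> bul B" "Y \<subseteq> bul B" "Z \<subseteq> bul B"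
    by (auto simp: bfin_def)
  have "X \<subseteq> span B k \<alpha> Y" "Y \<subseteq> span B k \<alpha> X"
    using mulc bul span_superset[of X] span_superset[of Y] by auto
  then have "smul B X Z \<subseteq> span B k \<alpha> (smul B Y Z)" "smul B Y Z \<subseteq> span B k \<alpha> (smul B X Z)"
    using smul_subset_span_smul bul by blast+
  then have "span B k \<alpha> (smul B X Z) = span B k \<alpha> (smul B Y Z)"
    using bul smul_subset_bul by (intro span_eqI) auto
  with mulc show ?case
    by (simp add: smul_bfin)
qed auto

lemma mmul_memb_single:
  "x \<in> car B \<Longrightarrow> m \<in> car B \<Longrightarrow> m \<noteq> zer B \<Longrightarrow> mmul B (memb B x) {#m#} = memb B (mul B x m)"
  by (auto simp: mmul_def memb_def)

lemma bend_cong_union_absorb: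
  assumes N: "finite N" and absorb: "\<forall>n\<in>N. bend_cong B k \<alpha> (insert n Y) Y" and Y: "Y \<in> bfin B"
  shows "bend_cong B k \<alpha> (N \<union> Y) Y"
  using N absorb
proof (induction N rule: finite_induct)
  case empty
  then show ?case
    using bend_cong.refl[where k = k and \<alpha> = \<alpha>, OF Y] by simp
next
  case (insert n N)
  then have IH: "bend_cong B k \<alpha> (N \<union> Y) Y" and n: "bend_cong B k \<alpha> (insert n Y) Y"
    by auto
  then have "N \<union> Y \<in> bfin B"
    using bend_cong_span by blast
  from bend_cong.addc[OF n this] have "bend_cong B k \<alpha> (insert n N \<union> Y) (N \<union> Y)"
    by (simp add: Un_commute Un_left_commute)
  then show ?case
    using IH bend_cong.trans by blast
qed

lemma bend_cong_insert_absorb: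
  assumes p: "bend_cong B k \<alpha> (insert p W) W" and W: "bend_cong B k \<alpha> (W \<union> Y) Y"
  shows "bend_cong B k \<alpha> (insert p Y) Y"
proof -
  have "insert p W \<in> bfin B" "Y \<in> bfin B"
    using bend_cong_span p W by blast+
  then have Y: "Y \<in> bfin B" and pY: "insert p Y \<in> bfin B"
    unfolding bfin_def by auto
  from bend_cong.addc[OF p Y] have "bend_cong B k \<alpha> (insert p (W \<union> Y)) (W \<union> Y)"
    by simp
  then have 1: "bend_cong B k \<alpha> (insert p (W \<union> Y)) Y"
    using W bend_cong.trans by blast
  from bend_cong.addc[OF W pY] have "bend_cong B k \<alpha> (insert p (W \<union> Y)) (insert p Y)"
    by (simp add: insert_absorb Un_absorb)
  then show ?thesis
    using 1 bend_cong.sym bend_cong.trans by blast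
qed

text \<open>The elements \<open>m\<close> that the congruence can absorb into \<open>Y\<close> form a \<open>k\<close>-span containing \<open>Y\<close>.\<close>

lemma bend_cong_insert_span:
  assumes Y: "Y \<in> bfin B" and m: "m \<in> span B k \<alpha> Y" and m0: "m \<noteq> zer B"
  shows "bend_cong B k \<alpha> (insert m Y) Y"
proof -
  let ?M = "{m \<in> bul B. m = zer B \<or> bend_cong B k \<alpha> (insert m Y) Y}"
  have "kspan B k \<alpha> ?M"
  proof (rule kspanI)
    fix c m
    assume c: "c \<in> bul k" and "m \<in> ?M"
    then have m: "m \<in> bul B" "m = zer B \<or> bend_cong B k \<alpha> (insert m Y) Y"
      by auto
    let ?p = "mul B (\<alpha> c) m"
    show "?p \<in> ?M"
    proof (cases "?p = zer B")
      case False
      then have "m \<noteq> zer B"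
        using c by auto
      have "mon_le B k \<alpha> (mmul B (memb B (\<alpha> c)) {#m#}) (mmul B (memb B (one B)) {#m#})"
        using mon_le.kle[OF c] m \<open>m \<noteq> zer B\<close> by (intro mon_le.mulc) auto
      moreover have "mmul B (memb B (\<alpha> c)) {#m#} = memb B ?p"
        using mmul_memb_single c m \<open>m \<noteq> zer B\<close> by simp
      moreover have "mmul B (memb B (one B)) {#m#} = {#m#}"
        using mmul_memb_single[of "one B" m] m \<open>m \<noteq> zer B\<close> by (simp add: memb_def)
      ultimately have "mon_le B k \<alpha> (memb B ?p) {#m#}"
        by simp
      then have "bend_cong B k \<alpha> (semb B ?p \<union> {m}) {m}"
        using bend_cong.gen[where a = ?p and bs = "{#m#}" and B = B and k = k and \<alpha> = \<alpha>] c m \<open>m \<noteq> zer B\<close> by simp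
      then have "bend_cong B k \<alpha> (insert ?p Y) Y"
        using bend_cong_insert_absorb[of ?p "{m}" Y] m \<open>m \<noteq> zer B\<close> False
        by (simp add: semb_def insert_commute)
      then show ?thesis
        using c m by simp
    qed (use c m in simp)
  next
    fix b as
    assume b: "b \<in> bul B" and as: "set as \<subseteq> ?M" and le: "le B b (sumlist B as)"
    show "b \<in> ?M"
    proof (cases "b = zer B")
      case False
      let ?N = "set as - {zer B}"
      have "mon_le B k \<alpha> (memb B b) (sum_list (map (memb B) as))"
        using mon_le.gen[OF b _ le] as by blast
      moreover have N: "set_mset (sum_list (map (memb B) as)) = ?N"
        by (rule set_mset_sum_list_memb)
      moreover have "?N \<subseteq> bul B - {zer B}"
        using as by blast
      ultimately have "bend_cong B k \<alpha> (semb B b \<union> ?N) ?N"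
        using bend_cong.gen[OF b, of "sum_list (map (memb B) as)" k \<alpha>] by simp
      moreover have "bend_cong B k \<alpha> (?N \<union> Y) Y"
        using bend_cong_union_absorb[OF _ _ Y] as by blast
      ultimately have "bend_cong B k \<alpha> (insert b Y) Y"
        using bend_cong_insert_absorb False by (simp add: semb_def)
      then show ?thesis
        using b by blast
    qed (use b in simp)
  qed auto
  moreover have "Y \<subseteq> ?M"
    using Y bend_cong.refl[where k = k and \<alpha> = \<alpha>, OF Y] unfolding bfin_def by (auto simp: insert_absorb)
  ultimately show ?thesis
    using span_least m m0 by blast
qed

lemma bend_cong_iff_span_eq:
  assumes X: "X \<in> bfin B" and Y: "Y \<in> bfin B"
  shows "bend_cong B k \<alpha> X Y \<longleftrightarrow> span B k \<alpha> X = span B k \<alpha> Y"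
proof
  assume eq: "span B k \<alpha> X = span B k \<alpha> Y"
  have bul: "X \<subseteq> bul B" "Y \<subseteq> bul B"
    using X Y unfolding bfin_def by auto
  have "bend_cong B k \<alpha> (X \<union> Y) Y"
    using X eq span_superset[OF bul(1)] bend_cong_insert_span[OF Y]
    by (intro bend_cong_union_absorb[OF _ _ Y]) (auto simp: bfin_def)
  moreover have "bend_cong B k \<alpha> (Y \<union> X) X"
    using Y eq span_superset[OF bul(2)] bend_cong_insert_span[OF X]
    by (intro bend_cong_union_absorb[OF _ _ X]) (auto simp: bfin_def)
  ultimately show "bend_cong B k \<alpha> X Y"
    using bend_cong.sym bend_cong.trans by (metis Un_commute)
qed (use bend_cong_span in blast)

lemma bend_class_eq:
  "X \<in> bfin B \<Longrightarrow> bend_rel B k \<alpha> `` {X} = {Z \<in> bfin B. span B k \<alpha> Z = span B k \<alpha> X}"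
  unfolding bend_rel_def using bend_cong_iff_span_eq bend_cong_span by blast

lemma An_eq_spans_bfin: "An B k \<alpha> = span B k \<alpha> ` bfin B"
proof (intro set_eqI iffI)
  fix M
  assume "M \<in> An B k \<alpha>"
  then obtain as where as: "set as \<subseteq> bul B" "M = span B k \<alpha> (set as)"
    unfolding An_def by blast
  then have "M = span B k \<alpha> (set as - {zer B})" "set as - {zer B} \<in> bfin B"
    using span_Diff_zer by (auto simp: bfin_def)
  then show "M \<in> span B k \<alpha> ` bfin B"
    by blast
next
  fix M
  assume "M \<in> span B k \<alpha> ` bfin B"
  then obtain X where X: "X \<in> bfin B" "M = span B k \<alpha> X"
    by blast
  moreover obtain as where "set as = X"
    using X finite_list unfolding bfin_def by blast
  ultimately show "M \<in> An B k \<alpha>"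
    unfolding An_def bfin_def by auto
qed

definition bend_class :: "'b set \<Rightarrow> 'b set set" where
  "bend_class M = {X \<in> bfin B. span B k \<alpha> X = M}"

lemma bend_class_span: "X \<in> bfin B \<Longrightarrow> bend_class (span B k \<alpha> X) = bend_rel B k \<alpha> `` {X}"
  by (auto simp: bend_class_def bend_class_eq)

lemma bend_class_bij: "bij_betw bend_class (An B k \<alpha>) (car (Bend_srng B k \<alpha>))"
proof (rule bij_betw_imageI)
  show "inj_on bend_class (An B k \<alpha>)"
  proof (rule inj_onI)
    fix M1 M2
    assume "M1 \<in> An B k \<alpha>" and eq: "bend_class M1 = bend_class M2"
    then obtain X where "X \<in> bfin B" "M1 = span B k \<alpha> X"
      unfolding An_eq_spans_bfin by blast
    then have "X \<in> bend_class M2"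
      using eq unfolding bend_class_def by blast
    then show "M1 = M2"
      using \<open>M1 = span B k \<alpha> X\<close> unfolding bend_class_def by blast
  qed
  have "bend_class ` An B k \<alpha> = (\<lambda>X. bend_rel B k \<alpha> `` {X}) ` bfin B"
    unfolding An_eq_spans_bfin image_image using bend_class_span by simp
  also have "\<dots> = bfin B // bend_rel B k \<alpha>"
    unfolding quotient_def by blast
  finally show "bend_class ` An B k \<alpha> = car (Bend_srng B k \<alpha>)"
    by (simp add: Bend_srng_def)
qed

lemma bend_class_hom: "srng_hom (An_srng B k \<alpha>) (Bend_srng B k \<alpha>) bend_class"
proof -
  have bfin_bul: "X \<subseteq> bul B" if "X \<in> bfin B" for X
    using that unfolding bfin_def by blast
  have in_class: "X \<in> bfin B \<and> M = span B k \<alpha> X" if "X \<in> bend_class M" for X M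
    using that unfolding bend_class_def by blast
  have nonempty: "\<exists>X. X \<in> bend_class M" if "M \<in> An B k \<alpha>" for M
    using that unfolding An_eq_spans_bfin bend_class_def by blast
  have add: "bend_class (An_add B M1 M2)
      = (\<Union>X\<in>bend_class M1. \<Union>Y\<in>bend_class M2. bend_rel B k \<alpha> `` {X \<union> Y})"
    if "M1 \<in> An B k \<alpha>" "M2 \<in> An B k \<alpha>" for M1 M2
    using nonempty[OF that(1)] nonempty[OF that(2)]
  proof (elim exE, intro UN_UN_constant_eq[symmetric])
    fix X Y
    assume "X \<in> bend_class M1" "Y \<in> bend_class M2"
    then have X: "X \<in> bfin B" "M1 = span B k \<alpha> X" and Y: "Y \<in> bfin B" "M2 = span B k \<alpha> Y"
      using in_class by blast+
    then have "An_add B M1 M2 = span B k \<alpha> (X \<union> Y)"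
      using An_add_span bfin_bul by simp
    moreover have "X \<union> Y \<in> bfin B"
      using X Y by (simp add: bfin_def)
    ultimately show "bend_rel B k \<alpha> `` {X \<union> Y} = bend_class (An_add B M1 M2)"
      using bend_class_span by simp
  qed
  have mul: "bend_class (An_mul B M1 M2)
      = (\<Union>X\<in>bend_class M1. \<Union>Y\<in>bend_class M2. bend_rel B k \<alpha> `` {smul B X Y})"
    if "M1 \<in> An B k \<alpha>" "M2 \<in> An B k \<alpha>" for M1 M2
    using nonempty[OF that(1)] nonempty[OF that(2)]
  proof (elim exE, intro UN_UN_constant_eq[symmetric])
    fix X Y
    assume "X \<in> bend_class M1" "Y \<in> bend_class M2"
    then have X: "X \<in> bfin B" "M1 = span B k \<alpha> X" and Y: "Y \<in> bfin B" "M2 = span B k \<alpha> Y"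
      using in_class by blast+
    then have "An_mul B M1 M2 = span B k \<alpha> (smul B X Y)"
      using An_mul_span bfin_bul by simp
    then show "bend_rel B k \<alpha> `` {smul B X Y} = bend_class (An_mul B M1 M2)"
      using bend_class_span smul_bfin X Y by simp
  qed
  have "bend_class (span B k \<alpha> {}) = bend_rel B k \<alpha> `` {{}}"
    using bend_class_span[of "{}"] by (simp add: bfin_def)
  moreover have "bend_class (span B k \<alpha> {one B}) = bend_rel B k \<alpha> `` {semb B (one B)}"
    using bend_class_span[OF semb_bfin] span_semb by simp
  ultimately show ?thesis
    using bend_class_bij add mul unfolding srng_hom_def bij_betw_def
    by (auto simp: An_srng_def Bend_srng_def)
qed

lemma span_list_An: "set as \<subseteq> bul B \<Longrightarrow> span B k \<alpha> (set as) \<in> An B k \<alpha>"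
  unfolding An_def by blast

lemma span_singleton_An: "a \<in> bul B \<Longrightarrow> span B k \<alpha> {a} \<in> An B k \<alpha>"
  using span_list_An[of "[a]"] by simp

lemma span_zer: "span B k \<alpha> {zer B} = span B k \<alpha> {}"
  using span_Diff_zer[of "{zer B}"] by simp

lemma An_add_span_absorb:
  assumes A: "A \<subseteq> bul B" and a: "a \<in> span B k \<alpha> A"
  shows "An_add B (span B k \<alpha> {a}) (span B k \<alpha> A) = span B k \<alpha> A"
proof -
  have "a \<in> bul B"
    using a span_subset_bul[OF A] by blast
  then have "An_add B (span B k \<alpha> {a}) (span B k \<alpha> A) = span B k \<alpha> (insert a A)"
    using An_add_span[of "{a}" A] A by simp
  also have "\<dots> = span B k \<alpha> A"
    using A a \<open>a \<in> bul B\<close> span_superset[of "insert a A"] span_superset[OF A]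
    by (intro span_eqI) auto
  finally show ?thesis .
qed

lemma An_mul_span_singleton:
  "a \<in> bul B \<Longrightarrow> b \<in> bul B \<Longrightarrow> An_mul B (span B k \<alpha> {a}) (span B k \<alpha> {b}) = span B k \<alpha> {mul B a b}"
  using An_mul_span[of "{a}" "{b}"] span_Diff_zer[of "{mul B a b}"]
  by (simp add: smul_def)

context
  fixes S :: "('s, 'p) srng_scheme" and f :: "'b set \<Rightarrow> 's"
  assumes f: "f \<in> An_Hom B k \<alpha> S"
begin

lemma An_hom_closed: "M \<in> An B k \<alpha> \<Longrightarrow> f M \<in> car S"
  and An_hom_zer: "f (span B k \<alpha> {}) = zer S"
  and An_hom_one: "f (span B k \<alpha> {one B}) = one S"
  and An_hom_add: "M1 \<in> An B k \<alpha> \<Longrightarrow> M2 \<in> An B k \<alpha> \<Longrightarrow> f (An_add B M1 M2) = add S (f M1) (f M2)"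
  and An_hom_mul: "M1 \<in> An B k \<alpha> \<Longrightarrow> M2 \<in> An B k \<alpha> \<Longrightarrow> f (An_mul B M1 M2) = mul S (f M1) (f M2)"
  using f unfolding An_Hom_def srng_hom_def An_srng_def by simp_all

lemma An_hom_span_list:
  "set as \<subseteq> bul B \<Longrightarrow> f (span B k \<alpha> (set as)) = sumlist S (map (\<lambda>a. f (span B k \<alpha> {a})) as)"
proof (induction as)
  case Nil
  then show ?case
    using An_hom_zer by simp
next
  case (Cons a as)
  then have "span B k \<alpha> (set (a # as)) = An_add B (span B k \<alpha> {a}) (span B k \<alpha> (set as))"
    using An_add_span[of "{a}" "set as"] by simp
  with Cons show ?case
    using An_hom_add span_singleton_An span_list_An by simp
qed

lemma An_hom_absorb:
  "A \<subseteq> bul B \<Longrightarrow> finite A \<Longrightarrow> a \<in> span B k \<alpha> A \<Longrightarrow>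
    add S (f (span B k \<alpha> {a})) (f (span B k \<alpha> A)) = f (span B k \<alpha> A)"
  using An_add_span_absorb An_hom_add span_singleton_An span_subset_bul An_eq_spans_bfin
  by (metis finite_list span_list_An subsetD)

lemma val_of_hom_Val: "val_of_hom B k \<alpha> f \<in> Val B k \<alpha> S"
proof -
  let ?w = "val_of_hom B k \<alpha> f"
  have w: "?w a = f (span B k \<alpha> {a})" if "a \<in> bul B" for a
    using that by (simp add: val_of_hom_def)
  have valuation: "add S (?w a) (sumlist S (map ?w bs)) = sumlist S (map ?w bs)"
    if "a \<in> bul B" "set bs \<subseteq> bul B" "le B a (sumlist B bs)" for a bs
  proof -
    have map_w: "map ?w bs = map (\<lambda>b. f (span B k \<alpha> {b})) bs"
      using that(2) w by auto
    have "add S (f (span B k \<alpha> {a})) (f (span B k \<alpha> (set bs))) = f (span B k \<alpha> (set bs))"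
      using An_hom_absorb[of "set bs" a] le_sumlist_mem_span that by simp
    then show ?thesis
      unfolding map_w w[OF that(1)] An_hom_span_list[OF that(2)] .
  qed
  have integral: "add S (?w (\<alpha> c)) (one S) = one S" if "c \<in> bul k" for c
    using An_hom_absorb[of "{one B}" "\<alpha> c"] alpha_mem_span_one An_hom_one that w by simp
  have multiplicative: "?w (mul B a b) = mul S (?w a) (?w b)" if "a \<in> bul B" "b \<in> bul B" for a b
  proof -
    have "f (span B k \<alpha> {mul B a b}) = f (An_mul B (span B k \<alpha> {a}) (span B k \<alpha> {b}))"
      using that by (simp add: An_mul_span_singleton)
    also have "\<dots> = mul S (f (span B k \<alpha> {a})) (f (span B k \<alpha> {b}))"
      using An_hom_mul span_singleton_An that by simp
    finally show ?thesis
      using w that by simp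
  qed
  show ?thesis
    unfolding Val_def
    using w valuation integral multiplicative span_zer An_hom_zer An_hom_one An_hom_closed
      span_singleton_An
    by (auto simp: val_of_hom_def)
qed

end

end

locale blue_valuation = blue_algebra B k \<alpha> + S: idem_srng_struct S
  for B :: "('b, 'm) obp_scheme" and k :: "('k, 'n) obp_scheme" and \<alpha> :: "'k \<Rightarrow> 'b"
    and S :: "('s, 'p) srng_scheme" +
  fixes w :: "'b \<Rightarrow> 's"
  assumes w_Val: "w \<in> Val B k \<alpha> S"
begin

lemma w_closed: "a \<in> bul B \<Longrightarrow> w a \<in> car S"
  and w_one: "w (one B) = one S"
  and w_mul: "a \<in> bul B \<Longrightarrow> b \<in> bul B \<Longrightarrow> w (mul B a b) = mul S (w a) (w b)"
  and w_le: "a \<in> bul B \<Longrightarrow> set bs \<subseteq> bul B \<Longrightarrow> le B a (sumlist B bs) \<Longrightarrow>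
    add S (w a) (sumlist S (map w bs)) = sumlist S (map w bs)"
  and w_integral: "c \<in> bul k \<Longrightarrow> add S (w (\<alpha> c)) (one S) = one S"
  and w_extensional: "w \<in> extensional (bul B)"
  using w_Val unfolding Val_def by blast+

lemma map_w_closed: "set as \<subseteq> bul B \<Longrightarrow> set (map w as) \<subseteq> car S"
  using w_closed by auto

text \<open>The elements \<open>m\<close> with \<open>w m \<le> \<Sum> w a\<^sub>i\<close> form a \<open>k\<close>-span containing the \<open>a\<^sub>i\<close>.\<close>

lemma w_span_le:
  assumes as: "set as \<subseteq> bul B" and m: "m \<in> span B k \<alpha> (set as)"
  shows "add S (w m) (sumlist S (map w as)) = sumlist S (map w as)"
proof -
  let ?t = "sumlist S (map w as)"
  have t: "?t \<in> car S"
    using map_w_closed[OF as] by simp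
  let ?M = "{m \<in> bul B. add S (w m) ?t = ?t}"
  have "kspan B k \<alpha> ?M"
  proof (rule kspanI)
    fix c m
    assume c: "c \<in> bul k" and "m \<in> ?M"
    then have m: "m \<in> bul B" "add S (w m) ?t = ?t"
      by auto
    have "add S (mul S (w (\<alpha> c)) (w m)) (w m) = mul S (add S (w (\<alpha> c)) (one S)) (w m)"
      using c m w_closed by (simp add: S.distrib_right)
    also have "\<dots> = w m"
      using c m w_closed w_integral by simp
    finally have "add S (w (mul B (\<alpha> c) m)) (w m) = w m"
      using c m w_mul by simp
    then have "add S (w (mul B (\<alpha> c) m)) ?t = ?t"
      using S.absorb_trans[OF _ _ t _ m(2)] c m w_closed by simp
    then show "mul B (\<alpha> c) m \<in> ?M"
      using c m by simp
  next
    fix b bs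
    assume b: "b \<in> bul B" and bs: "set bs \<subseteq> ?M" and le: "le B b (sumlist B bs)"
    then have "set bs \<subseteq> bul B"
      by blast
    then have "add S (w b) (sumlist S (map w bs)) = sumlist S (map w bs)"
      "add S (sumlist S (map w bs)) ?t = ?t" "sumlist S (map w bs) \<in> car S"
      using w_le[OF b _ le] S.sumlist_absorb[OF map_w_closed t] bs map_w_closed by auto
    then have "add S (w b) ?t = ?t"
      using S.absorb_trans w_closed[OF b] t by blast
    then show "b \<in> ?M"
      using b by simp
  qed auto
  moreover have "set as \<subseteq> ?M"
    using as S.absorb_sumlist_member[OF map_w_closed[OF as]] by auto
  ultimately show ?thesis
    using span_least m by blast
qed

lemma sumlist_w_eq_if_span_eq:
  assumes as: "set as \<subseteq> bul B" and bs: "set bs \<subseteq> bul B"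
    and eq: "span B k \<alpha> (set as) = span B k \<alpha> (set bs)"
  shows "sumlist S (map w as) = sumlist S (map w bs)"
proof -
  have t: "sumlist S (map w as) \<in> car S" "sumlist S (map w bs) \<in> car S"
    using map_w_closed as bs by simp_all
  have "add S (sumlist S (map w as)) (sumlist S (map w bs)) = sumlist S (map w bs)"
    using S.sumlist_absorb[OF map_w_closed[OF as] t(2)] w_span_le[OF bs]
      eq span_superset[OF as] by auto
  moreover have "add S (sumlist S (map w bs)) (sumlist S (map w as)) = sumlist S (map w as)"
    using S.sumlist_absorb[OF map_w_closed[OF bs] t(1)] w_span_le[OF as]
      eq span_superset[OF bs] by auto
  ultimately show ?thesis
    using S.absorb_antisym t by blast
qed

text \<open>By \<open>sumlist_w_eq_if_span_eq\<close> the value does not depend on the chosen generators.\<close>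

definition hom_of_val :: "'b set \<Rightarrow> 's" where
  "hom_of_val = restrict
     (\<lambda>M. sumlist S (map w (SOME as. set as \<subseteq> bul B \<and> M = span B k \<alpha> (set as)))) (An B k \<alpha>)"

lemma hom_of_val_span: "set as \<subseteq> bul B \<Longrightarrow> hom_of_val (span B k \<alpha> (set as)) = sumlist S (map w as)"
proof -
  assume as: "set as \<subseteq> bul B"
  let ?P = "\<lambda>bs. set bs \<subseteq> bul B \<and> span B k \<alpha> (set as) = span B k \<alpha> (set bs)"
  have "?P (SOME bs. ?P bs)"
    using as by (intro someI[of ?P as]) simp
  then have "sumlist S (map w (SOME bs. ?P bs)) = sumlist S (map w as)"
    using sumlist_w_eq_if_span_eq[OF as] by metis
  then show ?thesis
    using span_list_An[OF as] unfolding hom_of_val_def by simp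
qed

lemma map_w_products:
  "set as \<subseteq> bul B \<Longrightarrow> set bs \<subseteq> bul B \<Longrightarrow>
    map w (concat (map (\<lambda>a. map (mul B a) bs) as)) = concat (map (\<lambda>x. map (mul S x) (map w bs)) (map w as))"
  by (induction as) (auto simp: w_mul subset_iff)

lemma hom_of_val_An_Hom: "hom_of_val \<in> An_Hom B k \<alpha> S"
proof -
  have An: "M \<in> An B k \<alpha> \<Longrightarrow> (\<And>as. set as \<subseteq> bul B \<Longrightarrow> M = span B k \<alpha> (set as) \<Longrightarrow> P) \<Longrightarrow> P"
    for M P unfolding An_def by blast
  have add: "hom_of_val (An_add B M1 M2) = add S (hom_of_val M1) (hom_of_val M2)"
    if "M1 \<in> An B k \<alpha>" "M2 \<in> An B k \<alpha>" for M1 M2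
  proof (rule An[OF that(1)], rule An[OF that(2)])
    fix as bs
    assume as: "set as \<subseteq> bul B" "M1 = span B k \<alpha> (set as)"
      and bs: "set bs \<subseteq> bul B" "M2 = span B k \<alpha> (set bs)"
    then have "An_add B M1 M2 = span B k \<alpha> (set (as @ bs))"
      using An_add_span by simp
    then show ?thesis
      using as bs hom_of_val_span[of "as @ bs"] hom_of_val_span map_w_closed
      by (simp add: S.sumlist_append)
  qed
  have mul: "hom_of_val (An_mul B M1 M2) = mul S (hom_of_val M1) (hom_of_val M2)"
    if "M1 \<in> An B k \<alpha>" "M2 \<in> An B k \<alpha>" for M1 M2
  proof (rule An[OF that(1)], rule An[OF that(2)])
    fix as bs
    assume as: "set as \<subseteq> bul B" "M1 = span B k \<alpha> (set as)"
      and bs: "set bs \<subseteq> bul B" "M2 = span B k \<alpha> (set bs)"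
    let ?cs = "concat (map (\<lambda>a. map (mul B a) bs) as)"
    have cs: "set ?cs \<subseteq> bul B"
      using as bs by (auto simp: subset_iff)
    have "smul B (set as) (set bs) = set ?cs - {zer B}"
      unfolding smul_def by auto
    then have "An_mul B M1 M2 = span B k \<alpha> (set ?cs)"
      using An_mul_span as bs span_Diff_zer[OF cs] by simp
    then have "hom_of_val (An_mul B M1 M2) = sumlist S (map w ?cs)"
      using hom_of_val_span[OF cs] by simp
    also have "\<dots> = mul S (sumlist S (map w as)) (sumlist S (map w bs))"
      using map_w_products[OF as(1) bs(1)] S.sumlist_mult_sumlist map_w_closed as bs by simp
    finally show ?thesis
      using as bs hom_of_val_span by simp
  qed
  have closed: "hom_of_val M \<in> car S" if "M \<in> An B k \<alpha>" for M
    using that by (rule An) (use hom_of_val_span map_w_closed in simp)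
  have "hom_of_val (span B k \<alpha> {}) = zer S" "hom_of_val (span B k \<alpha> {one B}) = one S"
    using hom_of_val_span[of "[]"] hom_of_val_span[of "[one B]"] w_one by simp_all
  then show ?thesis
    using add mul closed unfolding An_Hom_def srng_hom_def hom_of_val_def
    by (simp add: An_srng_def)
qed

lemma val_of_hom_of_val: "val_of_hom B k \<alpha> hom_of_val = w"
proof (rule extensionalityI[OF _ w_extensional])
  show "val_of_hom B k \<alpha> hom_of_val \<in> extensional (bul B)"
    unfolding val_of_hom_def by simp
  fix a
  assume "a \<in> bul B"
  then show "val_of_hom B k \<alpha> hom_of_val a = w a"
    using hom_of_val_span[of "[a]"] w_closed unfolding val_of_hom_def by simp
qed

end

context blue_algebra
begin

lemma val_of_hom_inj_on: "inj_on (val_of_hom B k \<alpha>) (An_Hom B k \<alpha> S)"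
proof (rule inj_onI)
  fix f g
  assume f: "f \<in> An_Hom B k \<alpha> S" and g: "g \<in> An_Hom B k \<alpha> S"
    and eq: "val_of_hom B k \<alpha> f = val_of_hom B k \<alpha> g"
  have singletons: "f (span B k \<alpha> {a}) = g (span B k \<alpha> {a})" if "a \<in> bul B" for a
    using fun_cong[OF eq, of a] that by (simp add: val_of_hom_def)
  show "f = g"
  proof (rule extensionalityI)
    show "f \<in> extensional (An B k \<alpha>)" "g \<in> extensional (An B k \<alpha>)"
      using f g by (simp_all add: An_Hom_def)
  next
    fix M
    assume "M \<in> An B k \<alpha>"
    then obtain as where as: "set as \<subseteq> bul B" "M = span B k \<alpha> (set as)"
      unfolding An_def by blast
    then have "map (\<lambda>a. f (span B k \<alpha> {a})) as = map (\<lambda>a. g (span B k \<alpha> {a})) as"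
      using singletons by auto
    then show "f M = g M"
      using as An_hom_span_list[OF f as(1)] An_hom_span_list[OF g as(1)] by (simp del: map_eq_conv)
  qed
qed

lemma val_of_hom_bij:
  assumes "idem_srng S"
  shows "bij_betw (val_of_hom B k \<alpha>) (An_Hom B k \<alpha> S) (Val B k \<alpha> S)"
proof (rule bij_betw_imageI[OF val_of_hom_inj_on])
  show "val_of_hom B k \<alpha> ` An_Hom B k \<alpha> S = Val B k \<alpha> S"
  proof
    show "val_of_hom B k \<alpha> ` An_Hom B k \<alpha> S \<subseteq> Val B k \<alpha> S"
      using val_of_hom_Val by blast
  next
    show "Val B k \<alpha> S \<subseteq> val_of_hom B k \<alpha> ` An_Hom B k \<alpha> S"
    proof
      fix w
      assume "w \<in> Val B k \<alpha> S"
      then interpret blue_valuation B k \<alpha> S w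
        using assms by unfold_locales (simp_all add: idem_srng_def)
      show "w \<in> val_of_hom B k \<alpha> ` An_Hom B k \<alpha> S"
        using val_of_hom_of_val hom_of_val_An_Hom by force
    qed
  qed
qed

lemma val_of_hom_restrict_comp:
  "val_of_hom B k \<alpha> (restrict (g \<circ> f) (An B k \<alpha>)) = restrict (g \<circ> val_of_hom B k \<alpha> f) (bul B)"
  by (rule ext) (simp add: val_of_hom_def span_singleton_An)

end

theorem theoremG:
  fixes k :: "'k obp" and B :: "'b obp" and \<alpha> :: "'k \<Rightarrow> 'b"
  assumes "ordered_blueprint k" and "ordered_blueprint B" and "obp_hom k B \<alpha>"
  shows "(\<exists>\<phi>. bij_betw \<phi> (An B k \<alpha>) (car (Bend_srng B k \<alpha>)) \<and>
              srng_hom (An_srng B k \<alpha>) (Bend_srng B k \<alpha>) \<phi> \<and>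
              (\<forall>a\<in>bul B. \<phi> (span B k \<alpha> {a}) = bend_rel B k \<alpha> `` {semb B a}))
       \<and> (\<forall>S :: 's srng. idem_srng S \<longrightarrow>
              bij_betw (val_of_hom B k \<alpha>) (An_Hom B k \<alpha> S) (Val B k \<alpha> S))
       \<and> (\<forall>(S :: 's srng) (T :: 't srng) g f. idem_srng S \<longrightarrow> idem_srng T \<longrightarrow>
              srng_hom S T g \<longrightarrow> f \<in> An_Hom B k \<alpha> S \<longrightarrow>
              val_of_hom B k \<alpha> (restrict (g \<circ> f) (An B k \<alpha>))
                = restrict (g \<circ> val_of_hom B k \<alpha> f) (bul B))"
proof -
  interpret blue_algebra B k \<alpha>
  proof unfold_locales
    show "comm_srng B" "ordered_blueprint B"
      using assms(2) unfolding ordered_blueprint_def by blast+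
    show "\<alpha> c \<in> bul B" if "c \<in> bul k" for c
      using assms(3) that unfolding obp_hom_def by blast
  qed
  have "\<forall>a\<in>bul B. bend_class (span B k \<alpha> {a}) = bend_rel B k \<alpha> `` {semb B a}"
    using bend_class_span[OF semb_bfin] span_semb by simp
  then show ?thesis
    using bend_class_bij bend_class_hom val_of_hom_bij val_of_hom_restrict_comp by blast
qed

end
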